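(* Let $\alpha\neq0$ be real, let $\mathbf{u}=(u_1,u_2)$ and $\mathbf{v}=(-u_1,u_2)$ be constant unit vectors with $u_1u_2\neq0$, and let $\mathbf{f}\in C_c^2(S^1;\mathbb{D})$. Then $\mathbf{f}$ can be recovered (in particular, is uniquely determined) from $\mathcal{L}_\alpha\mathbf{f}$ and $\mathcal{T}_\alpha\mathbf{f}$.
   Context: $\mathbb{D}$ is the open unit disc in $\mathbb{R}^2$; $C_c^2(S^1;\mathbb{D})$ is the space of $C^2$ vector fields with compact support in $\mathbb{D}$. $\mathbf{a}^\perp=(-a_2,a_1)$. $\mathcal{L}_\alpha\mathbf{f}(\mathbf{x})=-\int_0^\infty\mathbf{u}\cdot\mathbf{f}(\mathbf{x}+t\mathbf{u})\,dt+\alpha\int_0^\infty\mathbf{v}\cdot\mathbf{f}(\mathbf{x}+t\mathbf{v})\,dt$ and $\mathcal{T}_\alpha\mathbf{f}(\mathbf{x})=-\int_0^\infty\mathbf{u}^\perp\cdot\mathbf{f}(\mathbf{x}+t\mathbf{u})\,dt+\alpha\int_0^\infty\mathbf{v}^\perp\cdot\mathbf{f}(\mathbf{x}+t\mathbf{v})\,dt$. *)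

theory Defs
  imports "HOL-Analysis.Analysis"
begin

definition perp :: "real^2 \<Rightarrow> real^2" where
  "perp a = vector [- (a $ 2), a $ 1]"

definition C2_field :: "(real^2 \<Rightarrow> real^2) \<Rightarrow> bool" where
  "C2_field f \<longleftrightarrow>
     (\<exists>f' :: real^2 \<Rightarrow> ((real^2) \<Rightarrow>\<^sub>L (real^2)).
      \<exists>f'' :: real^2 \<Rightarrow> ((real^2) \<Rightarrow>\<^sub>L ((real^2) \<Rightarrow>\<^sub>L (real^2))).
        (\<forall>x. (f has_derivative blinfun_apply (f' x)) (at x)) \<and>
        (\<forall>x. (f' has_derivative blinfun_apply (f'' x)) (at x)) \<and>
        continuous_on UNIV f'')"

definition Cc2_disc :: "(real^2 \<Rightarrow> real^2) \<Rightarrow> bool" where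
  "Cc2_disc f \<longleftrightarrow> C2_field f \<and> compact (closure {x. f x \<noteq> 0}) \<and>
     closure {x. f x \<noteq> 0} \<subseteq> ball 0 1"

definition L_op :: "real \<Rightarrow> real^2 \<Rightarrow> real^2 \<Rightarrow> (real^2 \<Rightarrow> real^2) \<Rightarrow> real^2 \<Rightarrow> real" where
  "L_op \<alpha> u v f x =
     - integral {0..} (\<lambda>t. u \<bullet> f (x + t *\<^sub>R u))
     + \<alpha> * integral {0..} (\<lambda>t. v \<bullet> f (x + t *\<^sub>R v))"

definition T_op :: "real \<Rightarrow> real^2 \<Rightarrow> real^2 \<Rightarrow> (real^2 \<Rightarrow> real^2) \<Rightarrow> real^2 \<Rightarrow> real" where
  "T_op \<alpha> u v f x =
     - integral {0..} (\<lambda>t. perp u \<bullet> f (x + t *\<^sub>R u))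
     + \<alpha> * integral {0..} (\<lambda>t. perp v \<bullet> f (x + t *\<^sub>R v))"

end

theory Submission
  imports Defs "HOL-Complex_Analysis.Conformal_Mappings"
begin

(* Let h = f - g and identify R^2 with C. Cut off at t = 2, the ray integral
   X_w(x) = integral of h(x + t w) dt has derivative -h(x) in direction w. The data say that
   X_u = beta X_v on the disc, with beta = -alpha (u_1 + i u_2)^2 non-real since alpha u_1 u_2 ~= 0.
   Hence G = X_u satisfies D_v G = beta D_u G: a Cauchy-Riemann equation in the oblique coordinates
   z |-> Re z u + Im z q with q = (v - Re beta u) / Im beta, in which G becomes holomorphic.
   G vanishes where x . u exceeds the support radius, so by analytic continuation it vanishes on
   the whole disc, and so does its derivative -h in direction u. *)

definition complex_of_vec2 :: "real^2 \<Rightarrow> complex" where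
  "complex_of_vec2 y = Complex (y$1) (y$2)"

lemma bounded_linear_complex_of_vec2: "bounded_linear complex_of_vec2"
proof -
  have "linear complex_of_vec2"
    by (rule linearI) (simp_all add: complex_of_vec2_def complex_eq_iff)
  then show ?thesis
    by (simp add: linear_conv_bounded_linear)
qed

lemma complex_of_vec2_eq_0_iff [simp]: "complex_of_vec2 y = 0 \<longleftrightarrow> y = 0"
  by (simp add: complex_of_vec2_def complex_eq_iff vec_eq_iff forall_2)

lemma complex_of_vec2_minus: "complex_of_vec2 (- y) = - complex_of_vec2 y"
  by (simp add: complex_of_vec2_def complex_eq_iff)

lemma complex_of_vec2_diff: "complex_of_vec2 (x - y) = complex_of_vec2 x - complex_of_vec2 y"
  by (simp add: complex_of_vec2_def complex_eq_iff)

lemma complex_of_vec2_reflect: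
  "complex_of_vec2 (vector [- (u $ 1), u $ 2]) = - cnj (complex_of_vec2 u)"
  by (simp add: complex_of_vec2_def complex_eq_iff)

lemma norm_complex_of_vec2 [simp]: "norm (complex_of_vec2 y) = norm y"
  by (simp add: complex_of_vec2_def cmod_def norm_vec_def L2_set_def sum_2)

lemma norm_reflect_vec2:
  fixes u :: "real^2"
  shows "norm (vector [- (u $ 1), u $ 2] :: real^2) = norm u"
  by (simp add: norm_vec_def L2_set_def sum_2)

lemma inner_perp_as_complex:
  "Complex (a \<bullet> y) (perp a \<bullet> y) = cnj (complex_of_vec2 a) * complex_of_vec2 y"
  by (simp add: complex_eq_iff complex_of_vec2_def inner_vec_def sum_2 perp_def)

lemma vec2_decompose:
  fixes p q y :: "real^2"
  assumes "p$1 * q$2 - p$2 * q$1 \<noteq> 0"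
  shows "\<exists>s t. y = s *\<^sub>R p + t *\<^sub>R q"
proof -
  define d where "d = p$1 * q$2 - p$2 * q$1"
  define s where "s = (y$1 * q$2 - y$2 * q$1) / d"
  define t where "t = (p$1 * y$2 - p$2 * y$1) / d"
  have "d \<noteq> 0"
    using assms by (simp add: d_def)
  then have "d * s = y$1 * q$2 - y$2 * q$1" "d * t = p$1 * y$2 - p$2 * y$1"
    by (simp_all add: s_def t_def)
  then have "d * (s * p$1 + t * q$1) = d * y$1" "d * (s * p$2 + t * q$2) = d * y$2"
    unfolding d_def by algebra+
  then have "s * p$1 + t * q$1 = y$1" "s * p$2 + t * q$2 = y$2"
    using \<open>d \<noteq> 0\<close> by simp_all
  then have "y = s *\<^sub>R p + t *\<^sub>R q"
    by (simp add: vec_eq_iff forall_2)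
  then show ?thesis by blast
qed

lemma cauchy_riemann_imp_has_field_derivative:
  fixes G :: "'a::real_normed_vector \<Rightarrow> complex"
  assumes G: "(G has_derivative DG) (at (Re z *\<^sub>R p + Im z *\<^sub>R q))"
    and CR: "DG q = \<i> * DG p"
  shows "((\<lambda>z. G (Re z *\<^sub>R p + Im z *\<^sub>R q)) has_field_derivative DG p) (at z)"
proof -
  interpret DG: bounded_linear DG
    using G by (rule has_derivative_bounded_linear)
  have "((\<lambda>z. G (Re z *\<^sub>R p + Im z *\<^sub>R q)) has_derivative
          (\<lambda>w. DG (Re w *\<^sub>R p + Im w *\<^sub>R q))) (at z)"
    by (rule has_derivative_compose[of "\<lambda>z. Re z *\<^sub>R p + Im z *\<^sub>R q", unfolded o_def, OF _ G])
       (auto intro!: derivative_eq_intros)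
  moreover have "DG (Re w *\<^sub>R p + Im w *\<^sub>R q) = DG p * w" for w
    using CR by (simp add: DG.add DG.scaleR complex_eq_iff scaleR_conv_of_real)
  ultimately show ?thesis
    unfolding has_field_derivative_def by (simp only:)
qed

lemma cauchy_riemann_analytic_continuation:
  fixes G :: "real^2 \<Rightarrow> complex"
  assumes det: "p$1 * q$2 - p$2 * q$1 \<noteq> 0"
    and S: "open S" "convex S"
    and CR: "\<And>x. x \<in> S \<Longrightarrow> \<exists>DG. (G has_derivative DG) (at x) \<and> DG q = \<i> * DG p"
    and T: "open T" "T \<subseteq> S" "T \<noteq> {}"
    and G0: "\<And>x. x \<in> T \<Longrightarrow> G x = 0"
    and x: "x \<in> S"
  shows "G x = 0"
proof -
  define \<Phi> where "\<Phi> z = Re z *\<^sub>R p + Im z *\<^sub>R q" for z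
  have "linear \<Phi>"
    by (rule linearI) (simp_all add: \<Phi>_def algebra_simps)
  then have \<Phi>_cont: "continuous_on UNIV \<Phi>"
    by (simp add: linear_continuous_on linear_conv_bounded_linear)
  have \<Phi>_surj: "\<exists>z. y = \<Phi> z" for y
  proof -
    obtain s t where "y = s *\<^sub>R p + t *\<^sub>R q"
      using vec2_decompose[OF det] by blast
    then have "y = \<Phi> (Complex s t)"
      by (simp add: \<Phi>_def)
    then show ?thesis ..
  qed
  have holo: "(G \<circ> \<Phi>) holomorphic_on \<Phi> -` S"
  proof -
    have "(G \<circ> \<Phi>) field_differentiable at z" if z: "\<Phi> z \<in> S" for z
    proof -
      obtain DG where "(G has_derivative DG) (at (\<Phi> z))" "DG q = \<i> * DG p"
        using CR[OF z] by blast
      from cauchy_riemann_imp_has_field_derivative[OF this[unfolded \<Phi>_def]]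
      show ?thesis
        unfolding field_differentiable_def o_def \<Phi>_def by blast
    qed
    then show ?thesis
      by (simp add: field_differentiable_at_within holomorphic_on_def)
  qed
  have "open (\<Phi> -` S)" "open (\<Phi> -` T)"
    using S(1) T(1) \<Phi>_cont by (simp_all add: open_vimage)
  moreover have "\<Phi> -` T \<noteq> {}"
  proof -
    obtain y where "y \<in> T"
      using T(3) by blast
    moreover obtain z where "y = \<Phi> z"
      using \<Phi>_surj by blast
    ultimately show ?thesis
      by blast
  qed
  moreover have "connected (\<Phi> -` S)"
    by (rule convex_connected, rule convex_linear_vimage) fact+
  moreover have "\<Phi> -` T \<subseteq> \<Phi> -` S"
    using T(2) by (rule vimage_mono)
  moreover obtain z where z: "x = \<Phi> z"
    using \<Phi>_surj by blast
  ultimately have "(G \<circ> \<Phi>) z = 0"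
    using analytic_continuation_open[of "\<Phi> -` T" "\<Phi> -` S" "G \<circ> \<Phi>" "\<lambda>_. 0" z] holo G0 x
    by simp
  then show ?thesis
    by (simp add: z)
qed

(* The beam transform, integral of h (x + t w) over t >= 0, cut off at t = 2: nothing is lost
   when x and the support of h lie in the unit disc and |w| = 1. *)
definition truncated_beam :: "(real^2 \<Rightarrow> real^2) \<Rightarrow> real^2 \<Rightarrow> real^2 \<Rightarrow> real^2" where
  "truncated_beam h w x = integral {0..2} (\<lambda>t. h (x + t *\<^sub>R w))"

lemma integrable_on_line:
  fixes h :: "'a::real_normed_vector \<Rightarrow> 'b::banach"
  assumes "continuous_on UNIV h"
  shows "(\<lambda>t. h (x + t *\<^sub>R w)) integrable_on {a..b}"
  by (intro integrable_continuous_interval continuous_on_compose2[OF assms] continuous_intros) auto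

lemma truncated_beam_diff:
  assumes "continuous_on UNIV f" "continuous_on UNIV g"
  shows "truncated_beam (\<lambda>y. f y - g y) w x = truncated_beam f w x - truncated_beam g w x"
  unfolding truncated_beam_def
  by (intro integral_diff integrable_on_line assms)

lemma norm_ray_gt:
  fixes x w :: "'a::real_normed_vector"
  assumes "norm x < 1" "norm w = 1" "r < 1" "2 \<le> t"
  shows "r < norm (x + t *\<^sub>R w)"
proof -
  have "norm (t *\<^sub>R w) - norm x \<le> norm (x + t *\<^sub>R w)"
    by (metis add.commute norm_diff_ineq)
  then show ?thesis
    using assms by simp
qed

lemma ray_integral_eq_truncated_beam:
  assumes h: "continuous_on UNIV h" and supp: "\<And>y. r < norm y \<Longrightarrow> h y = 0"
    and "r < 1" "norm x < 1" "norm w = 1"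
  shows "integral {0..} (\<lambda>t. a \<bullet> h (x + t *\<^sub>R w)) = a \<bullet> truncated_beam h w x"
proof -
  have "integral {0..} (\<lambda>t. a \<bullet> h (x + t *\<^sub>R w))
      = integral {0..} (\<lambda>t. if t \<in> {0..2} then a \<bullet> h (x + t *\<^sub>R w) else 0)"
    using supp norm_ray_gt[OF assms(4,5,3)] by (intro integral_cong) auto
  also have "\<dots> = integral {0..2} (\<lambda>t. a \<bullet> h (x + t *\<^sub>R w))"
    using integral_restrict_Int[where S="{0..2}" and T="{0..}" and f="\<lambda>t. a \<bullet> h (x + t *\<^sub>R w)"]
    by (simp add: Int_absorb2)
  also have "\<dots> = a \<bullet> truncated_beam h w x"
    unfolding truncated_beam_def
    using integral_linear[OF integrable_on_line[OF h] bounded_linear_inner_right[of a]]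
    by (simp add: o_def)
  finally show ?thesis .
qed

lemma has_derivative_truncated_beam:
  fixes h :: "real^2 \<Rightarrow> real^2"
  assumes h: "\<And>x. (h has_derivative blinfun_apply (h' x)) (at x)"
    and h': "continuous_on UNIV h'"
  shows "(truncated_beam h w has_derivative
           blinfun_apply (integral {0..2} (\<lambda>t. h' (x + t *\<^sub>R w)))) (at x)"
proof -
  have "continuous_on UNIV h"
    by (rule has_derivative_continuous_on[of UNIV h "\<lambda>x. blinfun_apply (h' x)"]) (simp add: h)
  have "((\<lambda>x. integral (cbox 0 2) (\<lambda>t. h (x + t *\<^sub>R w))) has_derivative
           blinfun_apply (integral (cbox 0 2) (\<lambda>t. h' (x + t *\<^sub>R w)))) (at x within UNIV)"
  proof (rule leibniz_rule[where f="\<lambda>x t. h (x + t *\<^sub>R w)" and fx="\<lambda>x t. h' (x + t *\<^sub>R w)"])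
    fix x t
    show "((\<lambda>x. h (x + t *\<^sub>R w)) has_derivative h' (x + t *\<^sub>R w)) (at x within UNIV)"
      using has_derivative_compose[OF has_derivative_add[OF has_derivative_ident has_derivative_const] h]
      by (simp add: o_def)
  next
    show "continuous_on (UNIV \<times> cbox 0 2) (\<lambda>(x, t). h' (x + t *\<^sub>R w))"
      unfolding split_beta by (intro continuous_on_compose2[OF h'] continuous_intros) auto
  next
    fix x
    show "(\<lambda>t. h (x + t *\<^sub>R w)) integrable_on cbox 0 2"
      unfolding cbox_interval by (rule integrable_on_line[OF \<open>continuous_on UNIV h\<close>])
  qed simp_all
  then show ?thesis
    by (simp add: truncated_beam_def[abs_def])
qed

lemma truncated_beam_derivative_along:
  fixes h :: "real^2 \<Rightarrow> real^2"
  assumes h: "\<And>x. (h has_derivative blinfun_apply (h' x)) (at x)"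
    and h': "continuous_on UNIV h'"
  shows "integral {0..2} (\<lambda>t. h' (x + t *\<^sub>R w)) w = h (x + 2 *\<^sub>R w) - h x"
proof -
  have "((\<lambda>t. h' (x + t *\<^sub>R w) w) has_integral h (x + 2 *\<^sub>R w) - h (x + 0 *\<^sub>R w)) {0..2}"
  proof (rule fundamental_theorem_of_calculus)
    fix t :: real
    have "((\<lambda>t. h (x + t *\<^sub>R w)) has_derivative (\<lambda>s. h' (x + t *\<^sub>R w) (s *\<^sub>R w))) (at t within {0..2})"
      by (rule has_derivative_compose[of "\<lambda>t. x + t *\<^sub>R w", unfolded o_def, OF _ h])
         (auto intro!: derivative_eq_intros)
    then show "((\<lambda>t. h (x + t *\<^sub>R w)) has_vector_derivative h' (x + t *\<^sub>R w) w) (at t within {0..2})"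
      by (simp add: has_vector_derivative_def blinfun.scaleR_right)
  qed simp
  moreover have "(\<lambda>t. h' (x + t *\<^sub>R w)) integrable_on {0..2}"
    using integrable_on_line[OF h'] .
  ultimately show ?thesis
    by (simp add: blinfun_apply_integral integral_unique)
qed

lemma truncated_beam_eq_0:
  fixes h :: "real^2 \<Rightarrow> real^2"
  assumes supp: "\<And>y. r < norm y \<Longrightarrow> h y = 0" and "norm w = 1" and "r < x \<bullet> w"
  shows "truncated_beam h w x = 0"
proof -
  have "r < norm (x + t *\<^sub>R w)" if "0 \<le> t" for t
  proof -
    have "r < (x + t *\<^sub>R w) \<bullet> w"
      using assms that by (simp add: inner_add_left dot_square_norm)
    also have "\<dots> \<le> norm (x + t *\<^sub>R w)"
      using norm_cauchy_schwarz[of "x + t *\<^sub>R w" w] \<open>norm w = 1\<close> by simp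
    finally show ?thesis .
  qed
  then have "integral {0..2} (\<lambda>t. h (x + t *\<^sub>R w)) = integral {0..2::real} (\<lambda>t. 0)"
    by (intro integral_cong) (simp add: supp)
  then show ?thesis
    by (simp add: truncated_beam_def)
qed

lemma truncated_beam_directional_derivatives:
  fixes h :: "real^2 \<Rightarrow> real^2" and \<beta> :: complex
  assumes h: "\<And>x. (h has_derivative blinfun_apply (h' x)) (at x)"
    and h': "continuous_on UNIV h'"
    and supp: "\<And>y. r < norm y \<Longrightarrow> h y = 0" and "r < 1"
    and "norm u = 1" "norm v = 1"
    and rel: "\<And>x. x \<in> ball 0 1 \<Longrightarrow>
      complex_of_vec2 (truncated_beam h u x) = \<beta> * complex_of_vec2 (truncated_beam h v x)"
    and x: "x \<in> ball 0 1"
  obtains DG where "((\<lambda>x. complex_of_vec2 (truncated_beam h u x)) has_derivative DG) (at x)"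
    and "DG u = - complex_of_vec2 (h x)" and "DG v = \<beta> * DG u"
proof -
  define DX where "DX w = blinfun_apply (integral {0..2} (\<lambda>t. h' (x + t *\<^sub>R w)))" for w
  have DX: "(truncated_beam h w has_derivative DX w) (at x)" for w
    unfolding DX_def by (rule has_derivative_truncated_beam[OF h h'])
  have along: "DX w w = - h x" if "norm w = 1" for w
  proof -
    have "h (x + 2 *\<^sub>R w) = 0"
      using x that \<open>r < 1\<close> by (intro supp norm_ray_gt) auto
    then show ?thesis
      by (simp add: DX_def truncated_beam_derivative_along[OF h h'])
  qed
  note complex_DX = bounded_linear.has_derivative[OF bounded_linear_complex_of_vec2 DX]
  have "((\<lambda>x. complex_of_vec2 (truncated_beam h u x)) has_derivative
          (\<lambda>y. \<beta> * complex_of_vec2 (DX v y))) (at x)"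
    by (rule has_derivative_transform_within_open[OF has_derivative_mult_right[OF complex_DX]
          open_ball x]) (simp add: rel)
  then have "(\<lambda>y. complex_of_vec2 (DX u y)) = (\<lambda>y. \<beta> * complex_of_vec2 (DX v y))"
    by (rule has_derivative_unique[OF complex_DX])
  then have "complex_of_vec2 (DX u v) = \<beta> * complex_of_vec2 (DX u u)"
    using along \<open>norm u = 1\<close> \<open>norm v = 1\<close> by (metis complex_of_vec2_minus)
  then show ?thesis
    using that[OF complex_DX] along \<open>norm u = 1\<close> by (simp add: complex_of_vec2_minus)
qed

lemma truncated_beam_eq_0_on_disc:
  fixes h :: "real^2 \<Rightarrow> real^2" and \<beta> :: complex
  assumes h: "\<And>x. (h has_derivative blinfun_apply (h' x)) (at x)"
    and h': "continuous_on UNIV h'"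
    and supp: "\<And>y. r < norm y \<Longrightarrow> h y = 0" and "0 \<le> r" "r < 1"
    and u: "norm u = 1" and v: "norm v = 1" and det: "u$1 * v$2 - u$2 * v$1 \<noteq> 0"
    and \<beta>: "Im \<beta> \<noteq> 0"
    and rel: "\<And>x. x \<in> ball 0 1 \<Longrightarrow>
      complex_of_vec2 (truncated_beam h u x) = \<beta> * complex_of_vec2 (truncated_beam h v x)"
    and x: "x \<in> ball 0 1"
  shows "truncated_beam h u x = 0"
proof -
  define q where "q = (1 / Im \<beta>) *\<^sub>R (v - Re \<beta> *\<^sub>R u)"
  have CR: "DG q = \<i> * DG u" if DG: "linear DG" and "DG v = \<beta> * DG u" for DG :: "real^2 \<Rightarrow> complex"
  proof -
    have "DG q = (1 / Im \<beta>) *\<^sub>R (DG v - Re \<beta> *\<^sub>R DG u)"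
      by (simp add: q_def linear_scale[OF DG] linear_diff[OF DG])
    also have "\<dots> = \<i> * DG u"
      using \<open>DG v = \<beta> * DG u\<close> \<beta> by (simp add: complex_eq_iff field_simps)
    finally show ?thesis .
  qed
  define T where "T = ball 0 1 \<inter> {x. u \<bullet> x > r}"
  have det_q: "u$1 * q$2 - u$2 * q$1 \<noteq> 0"
    using det \<beta> by (simp add: q_def field_simps)
  have G_CR: "\<exists>DG. ((\<lambda>x. complex_of_vec2 (truncated_beam h u x)) has_derivative DG) (at x)
      \<and> DG q = \<i> * DG u" if x: "x \<in> ball 0 1" for x
  proof -
    obtain DG where "((\<lambda>x. complex_of_vec2 (truncated_beam h u x)) has_derivative DG) (at x)"
      and "DG v = \<beta> * DG u"
      using truncated_beam_directional_derivatives[OF h h' supp \<open>r < 1\<close> u v rel x] by blast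
    then show ?thesis
      using CR has_derivative_linear by blast
  qed
  have "open T"
    by (simp add: T_def open_Int open_halfspace_gt)
  moreover have "T \<noteq> {}"
  proof -
    have "((1 + r) / 2) *\<^sub>R u \<in> T"
      using \<open>0 \<le> r\<close> \<open>r < 1\<close> u by (simp add: T_def dot_square_norm)
    then show ?thesis
      by blast
  qed
  moreover have "complex_of_vec2 (truncated_beam h u x) = 0" if "x \<in> T" for x
    using that truncated_beam_eq_0[OF supp u] by (simp add: T_def inner_commute)
  ultimately have "complex_of_vec2 (truncated_beam h u x) = 0"
    using cauchy_riemann_analytic_continuation[OF det_q open_ball convex_ball G_CR \<open>open T\<close> _
        \<open>T \<noteq> {}\<close> _ x]
    by (simp add: T_def)
  then show ?thesis
    by simp
qed

lemma truncated_beam_relation_imp_zero: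
  fixes h :: "real^2 \<Rightarrow> real^2" and \<beta> :: complex
  assumes h: "\<And>x. (h has_derivative blinfun_apply (h' x)) (at x)"
    and h': "continuous_on UNIV h'"
    and supp: "\<And>y. r < norm y \<Longrightarrow> h y = 0" and "0 \<le> r" "r < 1"
    and u: "norm u = 1" and v: "norm v = 1" and det: "u$1 * v$2 - u$2 * v$1 \<noteq> 0"
    and \<beta>: "Im \<beta> \<noteq> 0"
    and rel: "\<And>x. x \<in> ball 0 1 \<Longrightarrow>
      complex_of_vec2 (truncated_beam h u x) = \<beta> * complex_of_vec2 (truncated_beam h v x)"
  shows "h y = 0"
proof (cases "y \<in> ball 0 1")
  case False
  then show ?thesis
    using supp \<open>r < 1\<close> by simp
next
  case True
  obtain DG where DG: "((\<lambda>x. complex_of_vec2 (truncated_beam h u x)) has_derivative DG) (at y)"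
    and "DG u = - complex_of_vec2 (h y)"
    using truncated_beam_directional_derivatives[OF h h' supp \<open>r < 1\<close> u v rel True] by blast
  have beam_0: "truncated_beam h u x = 0" if "x \<in> ball 0 1" for x
    by (rule truncated_beam_eq_0_on_disc[OF h h' supp \<open>0 \<le> r\<close> \<open>r < 1\<close> u v det \<beta> rel that])
  have "((\<lambda>x. complex_of_vec2 (truncated_beam h u x)) has_derivative (\<lambda>_. 0)) (at y)"
    by (rule has_derivative_transform_within_open[OF has_derivative_const open_ball True])
       (simp add: beam_0)
  then have "DG = (\<lambda>_. 0)"
    by (rule has_derivative_unique[OF DG])
  then show ?thesis
    using \<open>DG u = - complex_of_vec2 (h y)\<close> by simp
qed

lemma Cc2_disc_imp_C1:
  assumes "Cc2_disc f"
  obtains f' where "\<And>x. (f has_derivative blinfun_apply (f' x)) (at x)"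
    and "continuous_on UNIV f'" and "continuous_on UNIV f"
proof -
  obtain f' f'' where f': "\<forall>x. (f has_derivative blinfun_apply (f' x)) (at x)"
    and f'': "\<forall>x. (f' has_derivative blinfun_apply (f'' x)) (at x)"
    using assms unfolding Cc2_disc_def C2_field_def by blast
  have "continuous_on UNIV f'" "continuous_on UNIV f"
    using f' f'' by (auto intro: has_derivative_continuous_on)
  with f' show thesis
    using that by blast
qed

lemma Cc2_disc_support_radius:
  assumes "Cc2_disc f"
  obtains r where "0 \<le> r" "r < 1" "\<And>y. r < norm y \<Longrightarrow> f y = 0"
proof -
  define K where "K = closure {x. f x \<noteq> 0}"
  have K: "compact K" "K \<subseteq> ball 0 1"
    using assms by (simp_all add: Cc2_disc_def K_def)
  have outside_K: "f y = 0" if "y \<notin> K" for y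
    using that closure_subset[of "{x. f x \<noteq> 0}"] by (auto simp: K_def)
  show thesis
  proof (cases "K = {}")
    case True
    then show thesis
      using that[of 0] outside_K by simp
  next
    case False
    then obtain k where "k \<in> K" "\<And>y. y \<in> K \<Longrightarrow> norm y \<le> norm k"
      using continuous_attains_sup[OF K(1) False continuous_on_norm_id] by blast
    then show thesis
      using that[of "norm k"] K(2) outside_K by force
  qed
qed

lemma Cc2_disc_common_support_radius:
  assumes "Cc2_disc f" "Cc2_disc g"
  obtains r where "0 \<le> r" "r < 1" "\<And>y. r < norm y \<Longrightarrow> f y = 0" "\<And>y. r < norm y \<Longrightarrow> g y = 0"
proof -
  obtain rf rg where "0 \<le> rf" "rf < 1" "\<And>y. rf < norm y \<Longrightarrow> f y = 0"
    and "0 \<le> rg" "rg < 1" "\<And>y. rg < norm y \<Longrightarrow> g y = 0"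
    using Cc2_disc_support_radius[OF assms(1)] Cc2_disc_support_radius[OF assms(2)] by metis
  then show thesis
    using that[of "max rf rg"] by simp
qed

lemma L_op_T_op_as_complex:
  assumes "continuous_on UNIV f" "\<And>y. r < norm y \<Longrightarrow> f y = 0" "r < 1" "norm x < 1"
    and u: "norm u = 1" and v: "norm v = 1"
  shows "Complex (L_op \<alpha> u v f x) (T_op \<alpha> u v f x) =
    of_real \<alpha> * (cnj (complex_of_vec2 v) * complex_of_vec2 (truncated_beam f v x))
    - cnj (complex_of_vec2 u) * complex_of_vec2 (truncated_beam f u x)"
proof -
  have ray: "integral {0..} (\<lambda>t. a \<bullet> f (x + t *\<^sub>R w)) = a \<bullet> truncated_beam f w x"
    if "norm w = 1" for a w
    using ray_integral_eq_truncated_beam[OF assms(1-4) that] .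
  show ?thesis
    unfolding L_op_def T_op_def ray[OF u] ray[OF v] inner_perp_as_complex[symmetric]
    by (simp add: complex_eq_iff)
qed

lemma truncated_beam_relation:
  fixes f g :: "real^2 \<Rightarrow> real^2"
  assumes f: "continuous_on UNIV f" and g: "continuous_on UNIV g"
    and f0: "\<And>y. r < norm y \<Longrightarrow> f y = 0" and g0: "\<And>y. r < norm y \<Longrightarrow> g y = 0"
    and "r < 1" and u: "norm u = 1" and v: "v = vector [- (u $ 1), u $ 2]" and x: "norm x < 1"
    and L: "L_op \<alpha> u v f x = L_op \<alpha> u v g x" and T: "T_op \<alpha> u v f x = T_op \<alpha> u v g x"
  shows "complex_of_vec2 (truncated_beam (\<lambda>y. f y - g y) u x) =
    - of_real \<alpha> * (complex_of_vec2 u)\<^sup>2 * complex_of_vec2 (truncated_beam (\<lambda>y. f y - g y) v x)"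
proof -
  define A where "A w = complex_of_vec2 (truncated_beam f w x)" for w
  define B where "B w = complex_of_vec2 (truncated_beam g w x)" for w
  have cv: "cnj (complex_of_vec2 v) = - complex_of_vec2 u"
    by (simp add: v complex_of_vec2_reflect)
  have "norm v = 1"
    using u by (simp add: v norm_reflect_vec2)
  have cu: "cnj (complex_of_vec2 u) * complex_of_vec2 u = 1"
    using complex_norm_square[of "complex_of_vec2 u"] u by (simp add: mult.commute)
  have "of_real \<alpha> * (cnj (complex_of_vec2 v) * A v) - cnj (complex_of_vec2 u) * A u =
      of_real \<alpha> * (cnj (complex_of_vec2 v) * B v) - cnj (complex_of_vec2 u) * B u"
    using L_op_T_op_as_complex[OF f f0 \<open>r < 1\<close> x u \<open>norm v = 1\<close>, of \<alpha>]
      L_op_T_op_as_complex[OF g g0 \<open>r < 1\<close> x u \<open>norm v = 1\<close>, of \<alpha>] L T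
    by (simp add: A_def B_def)
  then have "A u - B u = - of_real \<alpha> * (complex_of_vec2 u)\<^sup>2 * (A v - B v)"
    unfolding cv using cu by algebra
  then show ?thesis
    by (simp add: A_def B_def truncated_beam_diff[OF f g] complex_of_vec2_diff)
qed

theorem theorem7p2:
  fixes \<alpha> :: real and u v :: "real^2" and f g :: "real^2 \<Rightarrow> real^2"
  assumes "\<alpha> \<noteq> 0"
    and "norm u = 1"
    and "v = vector [- (u $ 1), u $ 2]"
    and "u $ 1 * u $ 2 \<noteq> 0"
    and "Cc2_disc f" and "Cc2_disc g"
    and "\<forall>x\<in>ball 0 1. L_op \<alpha> u v f x = L_op \<alpha> u v g x"
    and "\<forall>x\<in>ball 0 1. T_op \<alpha> u v f x = T_op \<alpha> u v g x"
  shows "f = g"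
proof -
  obtain f' g' where f': "\<And>x. (f has_derivative blinfun_apply (f' x)) (at x)"
      "continuous_on UNIV f'" "continuous_on UNIV f"
    and g': "\<And>x. (g has_derivative blinfun_apply (g' x)) (at x)"
      "continuous_on UNIV g'" "continuous_on UNIV g"
    using Cc2_disc_imp_C1[OF assms(5)] Cc2_disc_imp_C1[OF assms(6)] by metis
  obtain r where r: "0 \<le> r" "r < 1"
    and f0: "\<And>y. r < norm y \<Longrightarrow> f y = 0" and g0: "\<And>y. r < norm y \<Longrightarrow> g y = 0"
    using Cc2_disc_common_support_radius[OF assms(5,6)] by blast
  have "f y - g y = 0" for y
  proof (rule truncated_beam_relation_imp_zero[where h="\<lambda>y. f y - g y" and h'="\<lambda>x. f' x - g' x"
        and r=r and u=u and v=v and \<beta>="- of_real \<alpha> * (complex_of_vec2 u)\<^sup>2"])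
    show "((\<lambda>y. f y - g y) has_derivative blinfun_apply (f' x - g' x)) (at x)" for x
      by (rule has_derivative_eq_rhs[OF has_derivative_diff[OF f'(1) g'(1)]])
         (simp add: fun_eq_iff blinfun.diff_left)
    show "Im (- of_real \<alpha> * (complex_of_vec2 u)\<^sup>2) \<noteq> 0"
      using assms(1,4) by (simp add: complex_of_vec2_def power2_eq_square)
    show "complex_of_vec2 (truncated_beam (\<lambda>y. f y - g y) u x) =
        - of_real \<alpha> * (complex_of_vec2 u)\<^sup>2 * complex_of_vec2 (truncated_beam (\<lambda>y. f y - g y) v x)"
      if "x \<in> ball 0 1" for x
      using truncated_beam_relation[OF f'(3) g'(3) f0 g0 r(2) assms(2,3)] that assms(7,8) by simp
  qed (use r f0 g0 f'(2) g'(2) assms(2-4) norm_reflect_vec2 in \<open>auto intro: continuous_on_diff\<close>)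
  then show ?thesis
    by (simp add: fun_eq_iff)
qed

end
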